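(* Let $\theta\in\mathrm{Irr}(N)$, let $N\le L\le\mathrm{Stab}_G(\tilde\theta)$ and $N\le K\le\mathrm{Stab}_G(\theta)$ with $L$ normalising $K$, and let $\hat\theta$ be a strong extension of $\theta$ to $K$. Let $g\in L$ and suppose $\psi_g,\psi'_g\in\mathrm{Lin}(G)$ both satisfy ${}^g\theta=\theta\psi_g|_N=\theta\psi'_g|_N$, and that $\mu,\mu'\in F_K$ satisfy ${}^g\hat\theta=\hat\theta\,\psi_g|_K\,\mu=\hat\theta\,\psi'_g|_K\,\mu'$. Then $\mu\Gamma_{K,\tilde\theta}=\mu'\Gamma_{K,\tilde\theta}$; that is, the coset $\mu(gN)\Gamma_{K,\tilde\theta}$ is independent of the choice of $\psi_g|_K$.
   Context: $G$ is a profinite group, $N$ an open normal subgroup; $\mathrm{Irr}$, $\mathrm{Lin}$ denote continuous irreducible, resp. degree-one, complex characters; $\tilde\theta=\{\theta\psi|_N:\psi\in\mathrm{Lin}(G)\}$ is the $G$-twist class of $\theta$, with $G$ acting by conjugation ${}^g\theta(n)=\theta(g^{-1}ng)$. A projective representation of $K$ is $\Pi:K\to\mathrm{GL}_m(\mathbb{C})$ with $\Pi(x)\Pi(y)=\alpha(x,y)\Pi(xy)$ ($\alpha$ the factor set); its projective character is $\mathrm{Tr}\circ\Pi$. A strong extension of $\theta$ to $K$ (with $K$ fixing $\theta$) is the projective character of a projective representation $\Pi$ of $K$ with $\Pi(xn)=\Pi(x)\Theta(n)$, $\Pi(nx)=\Theta(n)\Pi(x)$ ($x\in K,n\in N$)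 for a representation $\Theta$ affording $\theta$. $F_K$ is the group of functions $K/N\to\mathbb{C}^\times$ (viewed as functions on $K$ constant on $N$-cosets) under pointwise multiplication; ${}^gf(x)=f(g^{-1}xg)$. $\mathrm{Lin}(K/N)$ is the set of degree-one characters of $K$ trivial on $N$, and $\Gamma_{K,\tilde\theta}=\{\nu\in\mathrm{Lin}(K/N):\hat\theta\,\varepsilon|_K=\hat\theta\,\nu\text{ for some }\varepsilon\in\mathrm{Lin}(G)\}$ (independent of the choice of $\theta\in\tilde\theta$ and of $\hat\theta$). *)

theory Defs
  imports "HOL-Analysis.Analysis" "HOL-Algebra.Group" "HOL-Algebra.Coset"
begin

definition profinite_group :: "('g, 'b) monoid_scheme \<Rightarrow> 'g topology \<Rightarrow> bool" where
  "profinite_group G T \<longleftrightarrow>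
     group G \<and> topspace T = carrier G \<and>
     continuous_map (prod_topology T T) T (\<lambda>(x, y). x \<otimes>\<^bsub>G\<^esub> y) \<and>
     continuous_map T T (\<lambda>x. inv\<^bsub>G\<^esub> x) \<and>
     compact_space T \<and> Hausdorff_space T \<and>
     (\<forall>x \<in> topspace T. connected_component_of_set T x = {x})"

definition cont_rep :: "('g, 'b) monoid_scheme \<Rightarrow> 'g topology \<Rightarrow> 'g set
                         \<Rightarrow> ('g \<Rightarrow> complex^'m^'m) \<Rightarrow> bool" where
  "cont_rep G T H \<Theta> \<longleftrightarrow>
     (\<forall>x \<in> H. invertible (\<Theta> x)) \<and>
     (\<forall>x \<in> H. \<forall>y \<in> H. \<Theta> (x \<otimes>\<^bsub>G\<^esub> y) = \<Theta> x ** \<Theta> y) \<and>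
     continuous_map (subtopology T H) euclidean \<Theta>"

definition invariant_subspace :: "'g set \<Rightarrow> ('g \<Rightarrow> complex^'m^'m) \<Rightarrow> (complex^'m) set \<Rightarrow> bool" where
  "invariant_subspace H \<Theta> W \<longleftrightarrow>
     0 \<in> W \<and> (\<forall>v \<in> W. \<forall>w \<in> W. v + w \<in> W) \<and> (\<forall>c. \<forall>v \<in> W. c *s v \<in> W) \<and>
     (\<forall>x \<in> H. \<forall>v \<in> W. \<Theta> x *v v \<in> W)"

definition irreducible_rep :: "'g set \<Rightarrow> ('g \<Rightarrow> complex^'m^'m) \<Rightarrow> bool" where
  "irreducible_rep H \<Theta> \<longleftrightarrow>
     (\<forall>W. invariant_subspace H \<Theta> W \<longrightarrow> W = {0} \<or> W = UNIV)"

definition affords :: "'g set \<Rightarrow> ('g \<Rightarrow> complex^'m^'m) \<Rightarrow> ('g \<Rightarrow> complex) \<Rightarrow> bool" where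
  "affords H \<Theta> \<theta> \<longleftrightarrow> (\<forall>x \<in> H. \<theta> x = trace (\<Theta> x))"

definition irr_char :: "('g, 'b) monoid_scheme \<Rightarrow> 'g topology \<Rightarrow> 'g set
                         \<Rightarrow> ('m::finite) itself \<Rightarrow> ('g \<Rightarrow> complex) \<Rightarrow> bool" where
  "irr_char G T H (_::'m itself) \<theta> \<longleftrightarrow>
     (\<exists>\<Theta> :: 'g \<Rightarrow> complex^'m^'m. cont_rep G T H \<Theta> \<and> irreducible_rep H \<Theta> \<and> affords H \<Theta> \<theta>)"

definition lin_char :: "('g, 'b) monoid_scheme \<Rightarrow> 'g topology \<Rightarrow> 'g set \<Rightarrow> ('g \<Rightarrow> complex) \<Rightarrow> bool" where
  "lin_char G T H \<psi> \<longleftrightarrow>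
     (\<forall>x \<in> H. \<psi> x \<noteq> 0) \<and>
     (\<forall>x \<in> H. \<forall>y \<in> H. \<psi> (x \<otimes>\<^bsub>G\<^esub> y) = \<psi> x * \<psi> y) \<and>
     continuous_map (subtopology T H) euclidean \<psi>"

(* \<nu> \<in> Lin(K/N): degree-one characters of K trivial on N *)
definition lin_char_quot :: "('g, 'b) monoid_scheme \<Rightarrow> 'g topology \<Rightarrow> 'g set \<Rightarrow> 'g set
                              \<Rightarrow> ('g \<Rightarrow> complex) \<Rightarrow> bool" where
  "lin_char_quot G T K N \<nu> \<longleftrightarrow> lin_char G T K \<nu> \<and> (\<forall>n \<in> N. \<nu> n = 1)"

definition conj_fun :: "('g, 'b) monoid_scheme \<Rightarrow> 'g \<Rightarrow> ('g \<Rightarrow> 'c) \<Rightarrow> 'g \<Rightarrow> 'c" where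
  "conj_fun G g f = (\<lambda>x. f (inv\<^bsub>G\<^esub> g \<otimes>\<^bsub>G\<^esub> x \<otimes>\<^bsub>G\<^esub> g))"

definition stab_char :: "('g, 'b) monoid_scheme \<Rightarrow> 'g set \<Rightarrow> ('g \<Rightarrow> complex) \<Rightarrow> 'g set" where
  "stab_char G N \<theta> = {g \<in> carrier G. \<forall>n \<in> N. conj_fun G g \<theta> n = \<theta> n}"

(* Stab_G(\<theta>~), \<theta>~ = { \<theta> \<psi>|_N : \<psi> \<in> Lin(G) } *)
definition stab_twist :: "('g, 'b) monoid_scheme \<Rightarrow> 'g topology \<Rightarrow> 'g set \<Rightarrow> ('g \<Rightarrow> complex) \<Rightarrow> 'g set" where
  "stab_twist G T N \<theta> = {g \<in> carrier G. \<exists>\<psi>. lin_char G T (carrier G) \<psi> \<and>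
                              (\<forall>n \<in> N. conj_fun G g \<theta> n = \<theta> n * \<psi> n)}"

definition proj_rep :: "('g, 'b) monoid_scheme \<Rightarrow> 'g set \<Rightarrow> ('g \<Rightarrow> complex^'m^'m)
                         \<Rightarrow> ('g \<Rightarrow> 'g \<Rightarrow> complex) \<Rightarrow> bool" where
  "proj_rep G K Pr \<alpha> \<longleftrightarrow>
     (\<forall>x \<in> K. invertible (Pr x)) \<and>
     (\<forall>x \<in> K. \<forall>y \<in> K. \<alpha> x y \<noteq> 0 \<and> Pr x ** Pr y = mat (\<alpha> x y) ** Pr (x \<otimes>\<^bsub>G\<^esub> y))"

definition strong_ext :: "('g, 'b) monoid_scheme \<Rightarrow> 'g topology \<Rightarrow> 'g set \<Rightarrow> 'g set
                           \<Rightarrow> ('m::finite) itself \<Rightarrow> ('g \<Rightarrow> complex) \<Rightarrow> ('g \<Rightarrow> complex) \<Rightarrow> bool" where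
  "strong_ext G T N K (_::'m itself) \<theta> \<theta>h \<longleftrightarrow>
     (\<exists>(\<Theta> :: 'g \<Rightarrow> complex^'m^'m) (Pr :: 'g \<Rightarrow> complex^'m^'m) \<alpha>.
        cont_rep G T N \<Theta> \<and> affords N \<Theta> \<theta> \<and> proj_rep G K Pr \<alpha> \<and>
        (\<forall>x \<in> K. \<forall>n \<in> N. Pr (x \<otimes>\<^bsub>G\<^esub> n) = Pr x ** \<Theta> n \<and>
                          Pr (n \<otimes>\<^bsub>G\<^esub> x) = \<Theta> n ** Pr x) \<and>
        (\<forall>x \<in> K. \<theta>h x = trace (Pr x)))"

definition F_fun :: "('g, 'b) monoid_scheme \<Rightarrow> 'g set \<Rightarrow> 'g set \<Rightarrow> ('g \<Rightarrow> complex) \<Rightarrow> bool" where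
  "F_fun G K N \<mu> \<longleftrightarrow> (\<forall>x \<in> K. \<mu> x \<noteq> 0) \<and> (\<forall>x \<in> K. \<forall>n \<in> N. \<mu> (x \<otimes>\<^bsub>G\<^esub> n) = \<mu> x)"

(* \<Gamma>_{K,\<theta>~}, defined via the strong extension \<hat>\<theta> *)
definition Gamma :: "('g, 'b) monoid_scheme \<Rightarrow> 'g topology \<Rightarrow> 'g set \<Rightarrow> 'g set
                      \<Rightarrow> ('g \<Rightarrow> complex) \<Rightarrow> ('g \<Rightarrow> complex) set" where
  "Gamma G T K N \<theta>h = {\<nu>. lin_char_quot G T K N \<nu> \<and>
       (\<exists>\<epsilon>. lin_char G T (carrier G) \<epsilon> \<and> (\<forall>x \<in> K. \<theta>h x * \<epsilon> x = \<theta>h x * \<nu> x))}"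

end

theory Submission
  imports Defs "HOL-Computational_Algebra.Fundamental_Theorem_Algebra"
begin

text \<open>
  Put \<open>\<epsilon> = \<psi>\<^sub>g/\<psi>'\<^sub>g \<in> Lin(G)\<close> and \<open>\<nu> = \<mu>'/\<mu> \<in> F\<^sub>K\<close>. The two descriptions of \<open>\<^sup>g\<theta>\<close> and
  \<open>\<^sup>g\<hat>\<theta>\<close> give \<open>\<theta>\<epsilon> = \<theta>\<close> on \<open>N\<close> and \<open>\<hat>\<theta>\<epsilon> = \<hat>\<theta>\<nu>\<close> on \<open>K\<close>, so it remains to show \<open>\<nu> \<in> Lin(K/N)\<close>.

  By Burnside's theorem the irreducible representation affording \<open>\<theta>\<close> spans the full matrix
  algebra, and so does the representation \<open>\<Theta>\<close> underlying \<open>\<hat>\<theta>\<close>, which has the same character.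
  As the trace pairing is nondegenerate and \<open>\<theta>\<epsilon> = \<theta>\<close>, \<open>\<Theta> n \<mapsto> \<epsilon> n \<Theta> n\<close> extends to an algebra
  endomorphism of the matrix algebra. It sends the projective representation \<open>P\<close> underlying \<open>\<hat>\<theta>\<close>
  to \<open>P x / c x\<close> with \<open>c = \<nu>/\<epsilon>\<close>, so \<open>c\<close> and hence \<open>\<nu>\<close> are multiplicative. Finally \<open>\<nu>\<close> is
  continuous because it is constant on the cosets of the open subgroup \<open>N\<close>.
\<close>

definition smult_matrix :: "'a::times \<Rightarrow> 'a^'n^'m \<Rightarrow> 'a^'n^'m" where
  "smult_matrix c X = (\<chi> i j. c * X$i$j)"

lemma smult_matrix_nth [simp]: "smult_matrix c X $ i $ j = c * X$i$j"
  by (simp add: smult_matrix_def)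

lemma smult_matrix_mv [simp]: "smult_matrix c X *v v = c *s (X *v v)"
  for X :: "'a::comm_semiring_1^'n^'m"
  by (simp add: vec_eq_iff matrix_vector_mult_def sum_distrib_left mult_ac)

lemma smult_matrix_mult_left [simp]: "smult_matrix c X ** Y = smult_matrix c (X ** Y)"
  for X :: "'a::comm_semiring_1^'n^'m"
  by (simp add: vec_eq_iff matrix_matrix_mult_def sum_distrib_left mult_ac)

lemma smult_matrix_mult_right [simp]: "X ** smult_matrix c Y = smult_matrix c (X ** Y)"
  for X :: "'a::comm_semiring_1^'n^'m"
  by (simp add: vec_eq_iff matrix_matrix_mult_def sum_distrib_left mult_ac)

lemma trace_smult_matrix [simp]: "trace (smult_matrix c X) = c * trace X"
  for X :: "'a::comm_semiring_1^'n^'n"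
  by (simp add: trace_def sum_distrib_left)

lemma smult_matrix_smult_matrix [simp]: "smult_matrix c (smult_matrix d X) = smult_matrix (c * d) X"
  for X :: "'a::comm_semiring_1^'n^'m"
  by (simp add: vec_eq_iff mult.assoc)

lemma smult_matrix_1 [simp]: "smult_matrix 1 X = X"
  and smult_matrix_0 [simp]: "smult_matrix 0 X = 0"
  and smult_matrix_zero [simp]: "smult_matrix c (0::'a^'n^'m) = 0"
  for X :: "'a::comm_semiring_1^'n^'m"
  by (simp_all add: vec_eq_iff)

lemma smult_matrix_add: "smult_matrix c (X + Y) = smult_matrix c X + smult_matrix c Y"
  for X :: "'a::comm_semiring_1^'n^'m"
  by (simp add: vec_eq_iff algebra_simps)

lemma smult_matrix_add_left: "smult_matrix (c + d) X = smult_matrix c X + smult_matrix d X"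
  for X :: "'a::comm_semiring_1^'n^'m"
  by (simp add: vec_eq_iff algebra_simps)

lemma smult_matrix_sum: "smult_matrix c (sum f S) = (\<Sum>i\<in>S. smult_matrix c (f i))"
  for f :: "'i \<Rightarrow> 'a::comm_semiring_1^'n^'m"
  by (induction S rule: infinite_finite_induct) (simp_all add: smult_matrix_add)

lemma sum_smult_matrix_left: "(\<Sum>i\<in>S. smult_matrix (a i) X) = smult_matrix (sum a S) X"
  for X :: "'a::comm_semiring_1^'n^'m"
  by (induction S rule: infinite_finite_induct) (simp_all add: smult_matrix_add_left)

lemma scaleR_eq_smult_matrix: "r *\<^sub>R X = smult_matrix (of_real r) X"
  for X :: "'a::real_algebra_1^'n^'m"
  by (simp add: vec_eq_iff) (simp add: scaleR_conv_of_real)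

lemma smult_matrix_cancel: "smult_matrix a X = smult_matrix b X \<Longrightarrow> X \<noteq> 0 \<Longrightarrow> a = b"
  for X :: "'a::idom^'n^'m"
  by (metis (no_types, lifting) mult_cancel_right smult_matrix_nth vec_eq_iff zero_index)

lemma mat_mult_eq_smult_matrix: "mat c ** X = smult_matrix c X"
  for X :: "'a::comm_semiring_1^'n^'m"
  by (simp add: vec_eq_iff matrix_matrix_mult_def mat_def if_distrib[of "\<lambda>x. x * _"] cong: if_cong)

lemma matrix_add_rdistrib: "(X + Y) ** Z = X ** Z + Y ** Z"
  for X :: "'a::comm_semiring_1^'n^'m"
  by (simp add: vec_eq_iff matrix_matrix_mult_def sum.distrib algebra_simps)

lemma matrix_diff_rdistrib: "(X - Y) ** Z = X ** Z - Y ** Z"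
  for X :: "'a::comm_ring_1^'n^'m"
  by (simp add: vec_eq_iff matrix_matrix_mult_def sum_subtractf algebra_simps)

lemma matrix_mult_sum_left: "sum f S ** Y = (\<Sum>i\<in>S. f i ** Y)"
  for Y :: "'a::comm_semiring_1^'k^'n"
  by (induction S rule: infinite_finite_induct) (simp_all add: matrix_add_rdistrib)

lemma matrix_mult_sum_right: "Y ** sum f S = (\<Sum>i\<in>S. Y ** f i)"
  for Y :: "'a::comm_semiring_1^'n^'m"
  by (induction S rule: infinite_finite_induct) (simp_all add: matrix_add_ldistrib)

lemma trace_0 [simp]: "trace (0::'a::comm_semiring_1^'n^'n) = 0"
  by (simp add: trace_def)

lemma trace_sum: "trace (sum f S) = (\<Sum>i\<in>S. trace (f i))"
  for f :: "'i \<Rightarrow> 'a::comm_semiring_1^'n^'n"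
  by (induction S rule: infinite_finite_induct) (simp_all add: trace_add)

lemma mat_1_neq_0: "mat 1 \<noteq> (0::'a::zero_neq_one^'n^'n)"
proof
  assume "mat 1 = (0::'a^'n^'n)"
  then have "(mat 1 :: 'a^'n^'n) $ undefined $ undefined = 0" by simp
  then show False by (simp add: mat_def)
qed

lemma invertible_neq_0: "invertible X \<Longrightarrow> X \<noteq> (0::'a::comm_semiring_1^'n^'n)"
  using mat_1_neq_0 unfolding invertible_def by fastforce

lemma mv_axis: "(X *v axis j 1) $ i = X $ i $ j"
  for X :: "'a::comm_semiring_1^'n^'m"
  by (simp add: matrix_vector_mult_def axis_def if_distrib cong: if_cong)

lemma eq_0_if_mv_eq_0: "(\<And>z. X *v z = 0) \<Longrightarrow> X = 0"
  for X :: "'a::comm_semiring_1^'n^'m"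
  by (metis mv_axis vec_eq_iff zero_index)

definition outer_prod :: "'a::times^'m \<Rightarrow> 'a^'n \<Rightarrow> 'a^'n^'m" where
  "outer_prod u w = (\<chi> i j. u$i * w$j)"

lemma outer_prod_nth [simp]: "outer_prod u w $ i $ j = u$i * w$j"
  by (simp add: outer_prod_def)

lemma matrix_mult_outer_prod: "B ** outer_prod u w ** C = outer_prod (B *v u) (w v* C)"
  for u :: "'a::comm_semiring_1^'m"
proof -
  have "(B ** outer_prod u w ** C) $ a $ b = (\<Sum>l\<in>UNIV. (\<Sum>k\<in>UNIV. B$a$k * u$k) * (w$l * C$l$b))" for a b
    by (simp add: matrix_matrix_mult_def sum_distrib_right sum_distrib_left mult_ac)
  then show ?thesis
    by (simp add: vec_eq_iff matrix_vector_mult_def vector_matrix_mult_def sum_distrib_left)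
qed

lemma matrix_eq_sum_outer_prod_axis:
  "X = (\<Sum>i\<in>UNIV. \<Sum>j\<in>UNIV. smult_matrix (X$i$j) (outer_prod (axis i 1) (axis j 1)))"
  for X :: "'a::comm_semiring_1^'n^'m"
  by (simp add: vec_eq_iff axis_def if_distrib[of "\<lambda>x. _ * x"] cong: if_cong)

definition vdot :: "'a::comm_semiring_1^'n \<Rightarrow> 'a^'n \<Rightarrow> 'a" where
  "vdot x y = (\<Sum>i\<in>UNIV. x$i * y$i)"

lemma trace_mult_outer_prod: "trace (X ** outer_prod u w) = vdot (X *v u) w"
  by (simp add: trace_def vdot_def matrix_matrix_mult_def matrix_vector_mult_def
      sum_distrib_right mult.assoc)

lemma vdot_vector_matrix_mult: "vdot (w v* C) z = vdot w (C *v z)"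
proof -
  have "vdot (w v* C) z = (\<Sum>i\<in>UNIV. \<Sum>k\<in>UNIV. w$k * C$k$i * z$i)"
    by (simp add: vdot_def vector_matrix_mult_def sum_distrib_right)
  also have "\<dots> = (\<Sum>k\<in>UNIV. \<Sum>i\<in>UNIV. w$k * C$k$i * z$i)" by (rule sum.swap)
  also have "\<dots> = vdot w (C *v z)"
    by (simp add: vdot_def matrix_vector_mult_def sum_distrib_left mult.assoc)
  finally show ?thesis .
qed

lemma vdot_axis_right: "vdot w (axis k 1) = w $ k"
  by (simp add: vdot_def axis_def if_distrib cong: if_cong)

lemma trace_mult_outer_prod_axis: "trace (X ** outer_prod (axis j 1) (axis i 1)) = X$i$j"
  for X :: "'a::comm_semiring_1^'n^'n"
  by (simp add: trace_mult_outer_prod vdot_axis_right mv_axis)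

section \<open>Eigenvectors of complex matrices\<close>

definition poly_mv :: "'a::field^'m^'m \<Rightarrow> 'a poly \<Rightarrow> 'a^'m \<Rightarrow> 'a^'m" where
  "poly_mv M p v = foldr (\<lambda>a w. a *s v + M *v w) (coeffs p) 0"

lemma poly_mv_0 [simp]: "poly_mv M 0 v = 0"
  by (simp add: poly_mv_def)

lemma poly_mv_pCons [simp]: "poly_mv M (pCons a p) v = a *s v + M *v poly_mv M p v"
  by (cases "a = 0 \<and> p = 0") (auto simp: poly_mv_def cCons_def)

lemma poly_mv_add: "poly_mv M (p + q) v = poly_mv M p v + poly_mv M q v"
  by (induction p q rule: poly_induct2) (simp_all add: vec.add algebra_simps)

lemma poly_mv_smult: "poly_mv M (smult c p) v = c *s poly_mv M p v"
  by (induction p) (auto simp: vec.add vec.scale)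

lemma poly_mv_diff: "poly_mv M (p - q) v = poly_mv M p v - poly_mv M q v"
  using poly_mv_add[of M p "- q" v] poly_mv_smult[of M "-1" q v]
  by (simp add: vec_eq_iff)

lemma poly_mv_sum: "poly_mv M (sum f S) v = (\<Sum>i\<in>S. poly_mv M (f i) v)"
  by (induction S rule: infinite_finite_induct) (simp_all add: poly_mv_add)

lemma poly_mv_monom: "poly_mv M (monom c k) v = c *s ((*v) M ^^ k) v"
  by (induction k) (simp_all add: monom_Suc monom_0 vec.scale)

lemma poly_mv_in_invariant_subspace:
  assumes "vec.subspace R" "\<forall>x\<in>R. M *v x \<in> R" "v \<in> R"
  shows "poly_mv M p v \<in> R"
  using assms by (induction p) (auto simp: vec.subspace_def)

lemma eigenvector_if_poly_mv_eq_0: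
  fixes M :: "complex^'m^'m"
  assumes R: "vec.subspace R" and inv: "\<forall>x\<in>R. M *v x \<in> R" and v: "v \<in> R" "v \<noteq> 0"
    and p: "p \<noteq> 0" "poly_mv M p v = 0"
  shows "\<exists>w\<in>R. w \<noteq> 0 \<and> (\<exists>l. M *v w = l *s w)"
  using p
proof (induction "degree p" arbitrary: p rule: less_induct)
  case less
  show ?case
  proof (cases "degree p = 0")
    case True
    then obtain c where "p = [:c:]" by (metis degree_eq_zeroE)
    with less.prems v show ?thesis by simp
  next
    case False
    then obtain r where r: "poly p r = 0"
      by (metis fundamental_theorem_of_algebra constant_degree)
    define q where "q = synthetic_div p r"
    have pq: "p + smult r q = pCons 0 q"
      using synthetic_div_correct[of p r] r by (simp add: q_def)
    have "poly_mv M (p + smult r q) v = poly_mv M (pCons 0 q) v" using pq by simp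
    then have eigen: "M *v poly_mv M q v = r *s poly_mv M q v"
      using less.prems by (simp add: poly_mv_add poly_mv_smult)
    show ?thesis
    proof (cases "poly_mv M q v = 0")
      case False
      then show ?thesis using eigen poly_mv_in_invariant_subspace[OF R inv v(1)] by metis
    next
      case True
      have "degree q < degree p" using False by (simp add: q_def degree_synthetic_div)
      moreover have "q \<noteq> 0" using pq less.prems by auto
      ultimately show ?thesis using less.hyps True by blast
    qed
  qed
qed

text \<open>The vectors \<open>v, Mv, \<dots>, M\<^sup>mv\<close> with \<open>m = CARD('m)\<close> are linearly dependent; a dependence
  relation is a nonzero polynomial annihilating \<open>v\<close>.\<close>
lemma poly_mv_annihilating_poly_exists: "\<exists>p. p \<noteq> 0 \<and> poly_mv M p v = 0"
  for M :: "'a::field^'m^'m"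
proof -
  define f where "f k = ((*v) M ^^ k) v" for k
  define n where "n = CARD('m)"
  show ?thesis
  proof (cases "inj_on f {..n}")
    case False
    then obtain i j where ij: "i \<noteq> j" "f i = f j" by (auto simp: inj_on_def)
    define p where "p = monom (1::'a) i - monom 1 j"
    have "coeff p i = 1" using ij by (simp add: p_def)
    moreover have "poly_mv M p v = 0" using ij by (simp add: p_def poly_mv_diff poly_mv_monom f_def)
    ultimately show ?thesis by (metis coeff_0 zero_neq_one)
  next
    case True
    define S where "S = f ` {..n}"
    have "vec.dependent S"
    proof (rule ccontr)
      assume "vec.independent S"
      then have "card S \<le> vec.dim (UNIV :: ('a^'m) set)"
        using vec.independent_bound_general vec.dim_subset by (metis subset_UNIV order_trans)
      then have "card S \<le> n" by (metis vec_dim_card n_def)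
      then show False using True by (simp add: S_def card_image)
    qed
    then obtain u where u: "\<exists>w\<in>S. u w \<noteq> 0" "(\<Sum>w\<in>S. u w *s w) = 0"
      using vec.dependent_finite[of S] by (auto simp: S_def)
    define p where "p = (\<Sum>k\<le>n. monom (u (f k)) k)"
    have "poly_mv M p v = (\<Sum>w\<in>S. u w *s w)"
      using sum.reindex[OF True, of "\<lambda>w. u w *s w"]
      by (simp add: p_def poly_mv_sum poly_mv_monom f_def S_def)
    moreover obtain k0 where "k0 \<le> n" "u (f k0) \<noteq> 0" using u(1) by (auto simp: S_def)
    moreover have "coeff p k0 = u (f k0)" if "k0 \<le> n"
      using that by (simp add: p_def coeff_sum)
    ultimately show ?thesis using u(2) by (metis coeff_0)
  qed
qed

lemma invariant_subspace_has_eigenvector: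
  fixes M :: "complex^'m^'m"
  assumes R: "vec.subspace R" and inv: "\<forall>x\<in>R. M *v x \<in> R" and nz: "R \<noteq> {0}"
  shows "\<exists>w\<in>R. w \<noteq> 0 \<and> (\<exists>l. M *v w = l *s w)"
proof -
  obtain v where v: "v \<in> R" "v \<noteq> 0" using nz R vec.subspace_0 by blast
  then show ?thesis
    using poly_mv_annihilating_poly_exists[of M v] eigenvector_if_poly_mv_eq_0[OF R inv v] by blast
qed

section \<open>Burnside's theorem\<close>

text \<open>Conjugate a vector orthogonal to \<open>W\<close> for the real inner product: as \<open>W\<close> is closed under
  multiplication by \<open>\<i>\<close>, both the real and the imaginary part of the pairing vanish.\<close>
lemma proper_subspace_annihilator:
  fixes W :: "(complex^'m) set"
  assumes W: "vec.subspace W" and ne: "W \<noteq> UNIV"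
  shows "\<exists>z. z \<noteq> 0 \<and> (\<forall>y\<in>W. vdot y z = 0)"
proof -
  have scaleR: "scaleR r x = complex_of_real r *s x" for r and x :: "complex^'m"
    by (simp add: vec_eq_iff) (simp add: scaleR_conv_of_real)
  have "subspace W" using W unfolding subspace_def vec.subspace_def scaleR by blast
  then have "span W = W" by simp
  then have "dim W \<noteq> DIM(complex^'m)" using dim_eq_full[of W] ne by metis
  then have "dim W < DIM(complex^'m)" using dim_subset_UNIV[of W] by linarith
  then obtain z' where z': "z' \<noteq> 0" "\<And>y. y \<in> span W \<Longrightarrow> orthogonal z' y"
    using orthogonal_to_subspace_exists by blast
  define z where "z = (\<chi> i. cnj (z' $ i))"
  have "vdot y z = 0" if y: "y \<in> W" for y
  proof -
    have "\<i> *s y \<in> W" using W y by (simp add: vec.subspace_scale)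
    then have "inner z' y = 0" "inner z' (\<i> *s y) = 0"
      using z'(2) y span_base by (auto simp: orthogonal_def)
    moreover have "Re (vdot y z) = inner z' y"
      by (simp add: inner_vec_def inner_complex_def vdot_def z_def mult.commute)
    moreover have "Im (vdot y z) = - inner z' (\<i> *s y)"
      by (simp add: inner_vec_def inner_complex_def vdot_def z_def mult.commute flip: sum_negf)
    ultimately show ?thesis by (simp add: complex_eq_iff)
  qed
  moreover have "z \<noteq> 0" using z'(1) by (auto simp: z_def vec_eq_iff)
  ultimately show ?thesis by blast
qed

definition kernel_dim :: "complex^'n^'m \<Rightarrow> nat" where
  "kernel_dim X = vec.dim {z. X *v z = 0}"

lemma kernel_dim_le: "kernel_dim (X :: complex^'n^'m) \<le> CARD('n)"
  unfolding kernel_dim_def by (metis vec.dim_subset subset_UNIV vec_dim_card)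

lemma kernel_dim_less:
  assumes "\<And>y. T *v y = 0 \<Longrightarrow> S *v y = 0" "S *v z = 0" "T *v z \<noteq> 0"
  shows "kernel_dim T < kernel_dim S"
proof -
  have "{z. T *v z = 0} \<subset> {z. S *v z = 0}" using assms by auto
  then show ?thesis
    unfolding kernel_dim_def by (metis vec.dim_psubset vec.span_eq_iff vec.subspace_kernel)
qed

locale irreducible_matrix_algebra =
  fixes A :: "(complex^'m^'m) set"
  assumes one_mem: "mat 1 \<in> A"
    and add_mem: "X \<in> A \<Longrightarrow> Y \<in> A \<Longrightarrow> X + Y \<in> A"
    and mult_mem: "X \<in> A \<Longrightarrow> Y \<in> A \<Longrightarrow> X ** Y \<in> A"
    and smult_mem: "X \<in> A \<Longrightarrow> smult_matrix c X \<in> A"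
    and irreducible: "vec.subspace W \<Longrightarrow> (\<And>B w. B \<in> A \<Longrightarrow> w \<in> W \<Longrightarrow> B *v w \<in> W)
                        \<Longrightarrow> W = {0} \<or> W = UNIV"
begin

lemma zero_mem: "0 \<in> A"
  using smult_mem[OF one_mem, of 0] by simp

lemma sum_mem: "(\<And>i. i \<in> I \<Longrightarrow> f i \<in> A) \<Longrightarrow> sum f I \<in> A"
  by (induction I rule: infinite_finite_induct) (auto simp: zero_mem add_mem)

lemma column_transitive:
  assumes "v \<noteq> 0" shows "\<exists>B\<in>A. B *v v = y"
proof -
  define W where "W = (\<lambda>B. B *v v) ` A"
  have "vec.subspace W"
    unfolding vec.subspace_def
  proof (intro conjI ballI allI)
    show "0 \<in> W" unfolding W_def using zero_mem by force
    show "x + y \<in> W" if "x \<in> W" "y \<in> W" for x y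
      using that add_mem unfolding W_def by (force simp: matrix_vector_mult_add_rdistrib)
    show "c *s x \<in> W" if "x \<in> W" for c x
      using that smult_mem unfolding W_def by force
  qed
  moreover have "B *v w \<in> W" if "B \<in> A" "w \<in> W" for B w
    using that mult_mem unfolding W_def by (auto simp: matrix_vector_mul_assoc)
  moreover have "v \<in> W" using one_mem unfolding W_def by force
  ultimately have "W = UNIV" using irreducible assms by blast
  then show ?thesis unfolding W_def by (metis UNIV_I imageE)
qed

lemma row_transitive:
  assumes "w \<noteq> 0" shows "\<exists>C\<in>A. w v* C = r"
proof -
  define W where "W = (\<lambda>C. w v* C) ` A"
  have vm_smult: "w v* smult_matrix c C = c *s (w v* C)" for c and C :: "complex^'m^'m"
    by (simp add: vec_eq_iff vector_matrix_mult_def sum_distrib_left mult_ac)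
  have sub: "vec.subspace W"
    unfolding vec.subspace_def
  proof (intro conjI ballI allI)
    show "0 \<in> W" unfolding W_def using zero_mem
      by (force simp: vec_eq_iff vector_matrix_mult_def)
    show "x + y \<in> W" if "x \<in> W" "y \<in> W" for x y
      using that add_mem unfolding W_def by (force simp: vector_matrix_mult_add_rdistrib)
    show "c *s x \<in> W" if "x \<in> W" for c x
      using that smult_mem unfolding W_def by (force simp flip: vm_smult)
  qed
  have "W = UNIV"
  proof (rule ccontr)
    assume "W \<noteq> UNIV"
    then obtain z where z: "z \<noteq> 0" "\<forall>y\<in>W. vdot y z = 0"
      using proper_subspace_annihilator[OF sub] by blast
    have "w $ k = 0" for k
    proof -
      obtain C where "C \<in> A" "C *v z = axis k 1" using column_transitive[OF z(1)] by blast
      then show ?thesis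
        using z(2) unfolding W_def by (metis image_eqI vdot_axis_right vdot_vector_matrix_mult)
    qed
    then show False using assms by (simp add: vec_eq_iff)
  qed
  then show ?thesis unfolding W_def by (metis UNIV_I imageE)
qed

lemma nonzero_mem_of_max_kernel_dim:
  "\<exists>T\<in>A. T \<noteq> 0 \<and> (\<forall>X\<in>A. X \<noteq> 0 \<longrightarrow> kernel_dim X \<le> kernel_dim T)"
proof -
  have "\<forall>X. X \<in> A \<and> X \<noteq> 0 \<longrightarrow> kernel_dim X < Suc CARD('m)"
    by (intro allI impI le_imp_less_Suc kernel_dim_le)
  then obtain T where "T \<in> A \<and> T \<noteq> 0" "\<forall>X. X \<in> A \<and> X \<noteq> 0 \<longrightarrow> kernel_dim X \<le> kernel_dim T"
    using Lattices_Big.ex_has_greatest_nat[of "\<lambda>X. X \<in> A \<and> X \<noteq> 0" "mat 1" kernel_dim]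
      one_mem mat_1_neq_0 by meson
  then show ?thesis by blast
qed

text \<open>If \<open>T\<close> has maximal kernel, \<open>TBT - l T\<close> kills the kernel of \<open>T\<close> and, for an eigenvalue \<open>l\<close> of \<open>TB\<close>
  on the range of \<open>T\<close>, also a vector outside it; so it must vanish.\<close>
lemma compression_scalar:
  assumes T: "T \<in> A" "T \<noteq> 0" and max: "\<forall>X\<in>A. X \<noteq> 0 \<longrightarrow> kernel_dim X \<le> kernel_dim T"
    and B: "B \<in> A"
  shows "\<exists>l. T ** B ** T = smult_matrix l T"
proof -
  define R where "R = range ((*v) T)"
  have "vec.subspace R" unfolding R_def by (simp add: vec.subspace_image)
  moreover have "\<forall>x\<in>R. (T ** B) *v x \<in> R"
    unfolding R_def by (auto simp flip: matrix_vector_mul_assoc)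
  moreover have "R \<noteq> {0}" using T(2) eq_0_if_mv_eq_0 unfolding R_def by blast
  ultimately obtain w l where w: "w \<in> R" "w \<noteq> 0" "(T ** B) *v w = l *s w"
    using invariant_subspace_has_eigenvector by blast
  then obtain z where z: "w = T *v z" unfolding R_def by blast
  define S where "S = T ** B ** T + smult_matrix (- l) T"
  have "S \<in> A" unfolding S_def by (intro add_mem mult_mem smult_mem T(1) B)
  moreover have "S *v z = 0"
    using w(3) by (simp add: S_def z matrix_vector_mult_add_rdistrib flip: matrix_vector_mul_assoc)
  moreover have "S *v y = 0" if "T *v y = 0" for y
    using that by (simp add: S_def matrix_vector_mult_add_rdistrib flip: matrix_vector_mul_assoc)
  ultimately have "S = 0"
    using kernel_dim_less[of T S z] max w(2) z by fastforce
  then have "T ** B ** T = smult_matrix l T" by (simp add: S_def vec_eq_iff)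
  then show ?thesis ..
qed

lemma rank_one_mem: "\<exists>u w. u \<noteq> 0 \<and> w \<noteq> 0 \<and> outer_prod u w \<in> A"
proof -
  obtain T where T: "T \<in> A" "T \<noteq> 0" and max: "\<forall>X\<in>A. X \<noteq> 0 \<longrightarrow> kernel_dim X \<le> kernel_dim T"
    using nonzero_mem_of_max_kernel_dim by blast
  obtain x where "T *v x \<noteq> 0" using T(2) eq_0_if_mv_eq_0 by blast
  define u where "u = T *v x"
  have "u \<noteq> 0" using \<open>T *v x \<noteq> 0\<close> by (simp add: u_def)
  have "\<exists>c. T *v y = c *s u" for y
  proof -
    obtain B where B: "B \<in> A" "B *v u = y" using column_transitive \<open>u \<noteq> 0\<close> by blast
    obtain l where "T ** B ** T = smult_matrix l T" using compression_scalar[OF T max B(1)] by blast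
    then have "T *v y = l *s u"
      by (metis B(2) u_def matrix_vector_mul_assoc smult_matrix_mv)
    then show ?thesis by blast
  qed
  then have col: "T *v axis j 1 = (SOME c. T *v axis j 1 = c *s u) *s u" for j
    by (rule someI_ex)
  define w where "w = (\<chi> j. SOME c. T *v axis j 1 = c *s u)"
  have w: "T *v axis j 1 = w $ j *s u" for j using col by (simp add: w_def)
  have "T $ i $ j = u $ i * w $ j" for i j
    using mv_axis[of T j i] w[of j] by (simp add: mult.commute)
  then have "T = outer_prod u w" by (simp add: vec_eq_iff)
  moreover have "w \<noteq> 0" using T(2) \<open>T = outer_prod u w\<close> by (auto simp: vec_eq_iff)
  ultimately show ?thesis using T(1) \<open>u \<noteq> 0\<close> by blast
qed

theorem eq_UNIV: "A = UNIV"
proof -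
  obtain u w where u: "u \<noteq> 0" and w: "w \<noteq> 0" and uw: "outer_prod u w \<in> A"
    using rank_one_mem by blast
  have "outer_prod (axis i 1) (axis j 1) \<in> A" for i j
  proof -
    obtain B where "B \<in> A" "B *v u = axis i 1" using column_transitive[OF u] by blast
    moreover obtain C where "C \<in> A" "w v* C = axis j 1" using row_transitive[OF w] by blast
    ultimately show ?thesis using mult_mem uw by (metis matrix_mult_outer_prod)
  qed
  then have "X \<in> A" for X
    by (subst matrix_eq_sum_outer_prod_axis) (intro sum_mem smult_mem)
  then show ?thesis by blast
qed

end

section \<open>The linear span of a matrix representation\<close>

definition rep_span :: "'g set \<Rightarrow> ('g \<Rightarrow> complex^'m^'m) \<Rightarrow> (complex^'m^'m) set" where
  "rep_span N \<Theta> = {(\<Sum>n\<in>S. smult_matrix (a n) (\<Theta> n)) | S a. finite S \<and> S \<subseteq> N}"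

lemma rep_span_memI:
  "finite S \<Longrightarrow> S \<subseteq> N \<Longrightarrow> (\<Sum>n\<in>S. smult_matrix (a n) (\<Theta> n)) \<in> rep_span N \<Theta>"
  unfolding rep_span_def by blast

lemma sum_mem_rep_span:
  assumes "finite I" "f ` I \<subseteq> N"
  shows "(\<Sum>i\<in>I. smult_matrix (a i) (\<Theta> (f i))) \<in> rep_span N \<Theta>"
proof -
  have "(\<Sum>i\<in>I. smult_matrix (a i) (\<Theta> (f i)))
      = (\<Sum>n\<in>f ` I. \<Sum>i\<in>{i \<in> I. f i = n}. smult_matrix (a i) (\<Theta> (f i)))"
    using assms(1) by (rule sum.image_gen)
  also have "\<dots> = (\<Sum>n\<in>f ` I. smult_matrix (\<Sum>i\<in>{i \<in> I. f i = n}. a i) (\<Theta> n))"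
    by (intro sum.cong refl) (simp add: sum_smult_matrix_left[symmetric])
  also have "\<dots> \<in> rep_span N \<Theta>" using assms by (intro rep_span_memI) auto
  finally show ?thesis .
qed

lemma rep_span_mem_Theta: "n \<in> N \<Longrightarrow> \<Theta> n \<in> rep_span N \<Theta>"
  using sum_mem_rep_span[of "{n}" id N "\<lambda>_. 1" \<Theta>] by simp

lemma rep_span_add: "X \<in> rep_span N \<Theta> \<Longrightarrow> Y \<in> rep_span N \<Theta> \<Longrightarrow> X + Y \<in> rep_span N \<Theta>"
proof -
  assume "X \<in> rep_span N \<Theta>" "Y \<in> rep_span N \<Theta>"
  then obtain S a S' b where S: "finite S" "S \<subseteq> N" "X = (\<Sum>n\<in>S. smult_matrix (a n) (\<Theta> n))"
    and S': "finite S'" "S' \<subseteq> N" "Y = (\<Sum>n\<in>S'. smult_matrix (b n) (\<Theta> n))"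
    unfolding rep_span_def by blast
  have "X + Y = (\<Sum>i\<in>S <+> S'. smult_matrix (case_sum a b i) (\<Theta> (case_sum id id i)))"
    using S S' by (simp add: sum.Plus o_def)
  also have "\<dots> \<in> rep_span N \<Theta>"
    using S S' by (intro sum_mem_rep_span) auto
  finally show ?thesis .
qed

lemma rep_span_smult: "X \<in> rep_span N \<Theta> \<Longrightarrow> smult_matrix c X \<in> rep_span N \<Theta>"
proof -
  assume "X \<in> rep_span N \<Theta>"
  then obtain S a where "finite S" "S \<subseteq> N" "X = (\<Sum>n\<in>S. smult_matrix (a n) (\<Theta> n))"
    unfolding rep_span_def by blast
  then show ?thesis
    using rep_span_memI[of S N "\<lambda>n. c * a n" \<Theta>] by (simp add: smult_matrix_sum)
qed

lemma rep_span_0: "0 \<in> rep_span N \<Theta>"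
  using rep_span_memI[of "{}" N] by simp

lemma rep_span_sum: "(\<And>i. i \<in> I \<Longrightarrow> f i \<in> rep_span N \<Theta>) \<Longrightarrow> sum f I \<in> rep_span N \<Theta>"
  by (induction I rule: infinite_finite_induct) (auto simp: rep_span_0 rep_span_add)

locale matrix_rep =
  fixes G (structure) and N :: "'g set" and \<Theta> :: "'g \<Rightarrow> complex^'m^'m"
  assumes subgroup: "subgroup N G"
    and hom: "x \<in> N \<Longrightarrow> y \<in> N \<Longrightarrow> \<Theta> (x \<otimes> y) = \<Theta> x ** \<Theta> y"
begin

lemma m_closed: "x \<in> N \<Longrightarrow> y \<in> N \<Longrightarrow> x \<otimes> y \<in> N"
  using subgroup.m_closed[OF subgroup] by blast

lemma mult_sum_smult:
  assumes "f ` I \<subseteq> N" "g ` J \<subseteq> N"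
  shows "(\<Sum>i\<in>I. smult_matrix (a i) (\<Theta> (f i))) ** (\<Sum>j\<in>J. smult_matrix (b j) (\<Theta> (g j)))
       = (\<Sum>p\<in>I \<times> J. smult_matrix (a (fst p) * b (snd p)) (\<Theta> (f (fst p) \<otimes> g (snd p))))"
proof -
  have "(\<Sum>i\<in>I. smult_matrix (a i) (\<Theta> (f i))) ** (\<Sum>j\<in>J. smult_matrix (b j) (\<Theta> (g j)))
      = (\<Sum>i\<in>I. \<Sum>j\<in>J. smult_matrix (a i * b j) (\<Theta> (f i) ** \<Theta> (g j)))"
    unfolding matrix_mult_sum_left by (simp add: matrix_mult_sum_right smult_matrix_sum mult.commute)
  also have "\<dots> = (\<Sum>i\<in>I. \<Sum>j\<in>J. smult_matrix (a i * b j) (\<Theta> (f i \<otimes> g j)))"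
    using assms by (intro sum.cong refl) (auto simp: hom image_subset_iff)
  finally show ?thesis by (simp add: sum.cartesian_product case_prod_unfold)
qed

lemma rep_span_mult:
  assumes "X \<in> rep_span N \<Theta>" "Y \<in> rep_span N \<Theta>"
  shows "X ** Y \<in> rep_span N \<Theta>"
proof -
  obtain S a S' b where S: "finite S" "S \<subseteq> N" "X = (\<Sum>n\<in>S. smult_matrix (a n) (\<Theta> n))"
    and S': "finite S'" "S' \<subseteq> N" "Y = (\<Sum>n\<in>S'. smult_matrix (b n) (\<Theta> n))"
    using assms unfolding rep_span_def by blast
  have "X ** Y = (\<Sum>p\<in>S \<times> S'. smult_matrix (a (fst p) * b (snd p)) (\<Theta> (fst p \<otimes> snd p)))"
    using mult_sum_smult[of id S id S' a b] S S' by simp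
  also have "\<dots> \<in> rep_span N \<Theta>"
  proof (rule sum_mem_rep_span)
    show "(\<lambda>p. fst p \<otimes> snd p) ` (S \<times> S') \<subseteq> N"
      using S(2) S'(2) by (auto intro!: m_closed)
  qed (simp add: S(1) S'(1))
  finally show ?thesis .
qed

lemma rep_span_eq_UNIV_if_irreducible:
  assumes "\<Theta> \<one> = mat 1" "irreducible_rep N \<Theta>"
  shows "rep_span N \<Theta> = UNIV"
proof -
  interpret irreducible_matrix_algebra "rep_span N \<Theta>"
  proof
    show "mat 1 \<in> rep_span N \<Theta>"
      using assms(1) rep_span_mem_Theta subgroup.one_closed[OF subgroup] by metis
    fix W :: "(complex^'m) set"
    assume "vec.subspace W" "\<And>B w. B \<in> rep_span N \<Theta> \<Longrightarrow> w \<in> W \<Longrightarrow> B *v w \<in> W"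
    then have "invariant_subspace N \<Theta> W"
      unfolding invariant_subspace_def vec.subspace_def by (auto intro: rep_span_mem_Theta)
    then show "W = {0} \<or> W = UNIV" using assms(2) unfolding irreducible_rep_def by blast
  qed (auto intro: rep_span_add rep_span_mult rep_span_smult)
  show ?thesis by (rule eq_UNIV)
qed

lemma trace_mult_sum_smult:
  assumes "S \<subseteq> N" "S' \<subseteq> N"
  shows "trace ((\<Sum>n\<in>S. smult_matrix (a n) (\<Theta> n)) ** (\<Sum>n\<in>S'. smult_matrix (b n) (\<Theta> n)))
       = (\<Sum>p\<in>S \<times> S'. a (fst p) * b (snd p) * trace (\<Theta> (fst p \<otimes> snd p)))"
  using mult_sum_smult[of id S id S' a b] assms by (simp add: trace_sum)

end

lemma trace_mult_sum_smult_eq_if_same_trace: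
  assumes rep1: "matrix_rep G N \<Theta>\<^sub>1" and rep2: "matrix_rep G N \<Theta>\<^sub>2"
    and trace_eq: "\<forall>n\<in>N. trace (\<Theta>\<^sub>1 n) = trace (\<Theta>\<^sub>2 n)"
    and S: "S \<subseteq> N" "S' \<subseteq> N"
  shows "trace ((\<Sum>n\<in>S. smult_matrix (a n) (\<Theta>\<^sub>1 n)) ** (\<Sum>n\<in>S'. smult_matrix (b n) (\<Theta>\<^sub>1 n)))
       = trace ((\<Sum>n\<in>S. smult_matrix (a n) (\<Theta>\<^sub>2 n)) ** (\<Sum>n\<in>S'. smult_matrix (b n) (\<Theta>\<^sub>2 n)))"
  unfolding matrix_rep.trace_mult_sum_smult[OF rep1 S] matrix_rep.trace_mult_sum_smult[OF rep2 S]
proof (intro sum.cong refl)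
  fix p assume "p \<in> S \<times> S'"
  then have "fst p \<otimes>\<^bsub>G\<^esub> snd p \<in> N" using S by (auto intro!: matrix_rep.m_closed[OF rep1])
  then show "a (fst p) * b (snd p) * trace (\<Theta>\<^sub>1 (fst p \<otimes>\<^bsub>G\<^esub> snd p))
      = a (fst p) * b (snd p) * trace (\<Theta>\<^sub>2 (fst p \<otimes>\<^bsub>G\<^esub> snd p))"
    using trace_eq by simp
qed

text \<open>If \<open>\<Theta>\<^sub>1\<close> spans all matrices, choose preimages \<open>F i j\<close> in the span of \<open>\<Theta>\<^sub>2\<close> of the matrix
  units. Traces of products of span elements only depend on the common character, so the
  \<open>F i j\<close> have the same trace pairing as the matrix units and are therefore linearly independent.\<close>
lemma rep_span_eq_UNIV_if_same_trace:
  fixes \<Theta>\<^sub>1 \<Theta>\<^sub>2 :: "'g \<Rightarrow> complex^'m^'m"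
  assumes rep1: "matrix_rep G N \<Theta>\<^sub>1" and rep2: "matrix_rep G N \<Theta>\<^sub>2"
    and trace_eq: "\<forall>n\<in>N. trace (\<Theta>\<^sub>1 n) = trace (\<Theta>\<^sub>2 n)"
    and span1: "rep_span N \<Theta>\<^sub>1 = UNIV"
  shows "rep_span N \<Theta>\<^sub>2 = UNIV"
proof -
  define E :: "'m \<Rightarrow> 'm \<Rightarrow> complex^'m^'m" where "E i j = outer_prod (axis i 1) (axis j 1)" for i j
  have "\<exists>S a. finite S \<and> S \<subseteq> N \<and> E (fst p) (snd p) = (\<Sum>n\<in>S. smult_matrix (a n) (\<Theta>\<^sub>1 n))" for p
    using span1 unfolding rep_span_def by blast
  then obtain S a where S: "finite (S p)" "S p \<subseteq> N"
    and E: "E (fst p) (snd p) = (\<Sum>n\<in>S p. smult_matrix (a p n) (\<Theta>\<^sub>1 n))" for p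
    by metis
  define F where "F i j = (\<Sum>n\<in>S (i, j). smult_matrix (a (i, j) n) (\<Theta>\<^sub>2 n))" for i j
  have trace_F: "trace (F i j ** F k l) = trace (E i j ** E k l)" for i j k l
    unfolding F_def E[of "(i, j)", simplified] E[of "(k, l)", simplified]
    by (rule trace_mult_sum_smult_eq_if_same_trace[OF rep1 rep2 trace_eq S(2) S(2), symmetric])
  define L where "L X = (\<Sum>i\<in>UNIV. \<Sum>j\<in>UNIV. smult_matrix (X$i$j) (F i j))" for X :: "complex^'m^'m"
  have L_coord: "trace (L X ** F l k) = X$k$l" for X k l
  proof -
    have "trace (L X ** F l k) = trace ((\<Sum>i\<in>UNIV. \<Sum>j\<in>UNIV. smult_matrix (X$i$j) (E i j)) ** E l k)"
      by (simp add: L_def matrix_mult_sum_left trace_sum trace_F)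
    also have "\<dots> = X$k$l"
      unfolding E_def by (simp flip: matrix_eq_sum_outer_prod_axis add: trace_mult_outer_prod_axis)
    finally show ?thesis .
  qed
  have "inj L"
    by (rule injI) (metis L_coord vec_eq_iff)
  moreover have "linear L"
  proof
    show "L (X + Y) = L X + L Y" for X Y
      by (simp add: L_def smult_matrix_add_left sum.distrib)
    show "L (r *\<^sub>R X) = r *\<^sub>R L X" for r X
      by (simp add: L_def scaleR_eq_smult_matrix smult_matrix_sum)
  qed
  ultimately have "surj L" by (simp add: linear_injective_imp_surjective)
  moreover have "L X \<in> rep_span N \<Theta>\<^sub>2" for X
    unfolding L_def F_def using S by (intro rep_span_sum rep_span_smult rep_span_memI)
  ultimately show ?thesis by (metis UNIV_eq_I surjD)
qed

lemma rep_span_eq_UNIV_if_affords_irr_char: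
  fixes \<Theta> :: "'g \<Rightarrow> complex^'m^'m"
  assumes G: "group G" and irr: "irr_char G T N TYPE('m) \<theta>" and N: "subgroup N G"
    and rep: "cont_rep G T N \<Theta>" and aff: "affords N \<Theta> \<theta>"
  shows "rep_span N \<Theta> = UNIV"
proof -
  obtain \<Theta>\<^sub>1 :: "'g \<Rightarrow> complex^'m^'m"
    where rep1: "cont_rep G T N \<Theta>\<^sub>1" and irr1: "irreducible_rep N \<Theta>\<^sub>1" and aff1: "affords N \<Theta>\<^sub>1 \<theta>"
    using irr unfolding irr_char_def by blast
  have mrep1: "matrix_rep G N \<Theta>\<^sub>1" and mrep: "matrix_rep G N \<Theta>"
    using N rep rep1 unfolding matrix_rep_def cont_rep_def by blast+
  have "\<Theta>\<^sub>1 \<one>\<^bsub>G\<^esub> = mat 1"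
  proof -
    have one: "\<one>\<^bsub>G\<^esub> \<in> N" using N by (rule subgroup.one_closed)
    then obtain Q where "\<Theta>\<^sub>1 \<one>\<^bsub>G\<^esub> ** Q = mat 1"
      using rep1 unfolding cont_rep_def invertible_def by blast
    moreover have "\<Theta>\<^sub>1 \<one>\<^bsub>G\<^esub> ** \<Theta>\<^sub>1 \<one>\<^bsub>G\<^esub> = \<Theta>\<^sub>1 \<one>\<^bsub>G\<^esub>"
      using matrix_rep.hom[OF mrep1 one one] G by (simp add: group.is_monoid)
    ultimately show ?thesis by (metis matrix_mul_assoc matrix_mul_rid)
  qed
  then have "rep_span N \<Theta>\<^sub>1 = UNIV"
    using matrix_rep.rep_span_eq_UNIV_if_irreducible[OF mrep1] irr1 by blast
  moreover have "\<forall>n\<in>N. trace (\<Theta>\<^sub>1 n) = trace (\<Theta> n)" using aff aff1 unfolding affords_def by simp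
  ultimately show ?thesis using rep_span_eq_UNIV_if_same_trace[OF mrep1 mrep] by blast
qed

section \<open>Twisting a representation by a linear character\<close>

locale spanning_rep = matrix_rep G N \<Theta>
  for G :: "('g, 'b) monoid_scheme" (structure) and N and \<Theta> :: "'g \<Rightarrow> complex^'m^'m" +
  assumes spans: "rep_span N \<Theta> = UNIV"
begin

lemma eq_0_if_trace_mult_eq_0:
  assumes "\<And>n. n \<in> N \<Longrightarrow> trace (X ** \<Theta> n) = 0"
  shows "X = 0"
proof -
  have "trace (X ** Y) = 0" for Y
  proof -
    obtain S a where "S \<subseteq> N" "Y = (\<Sum>n\<in>S. smult_matrix (a n) (\<Theta> n))"
      using spans unfolding rep_span_def by blast
    then show ?thesis using assms by (auto simp: matrix_mult_sum_right trace_sum intro!: sum.neutral)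
  qed
  then show ?thesis by (metis trace_mult_outer_prod_axis vec_eq_iff zero_index)
qed

end

text \<open>Since \<open>\<Theta>\<close> spans all matrices, \<open>\<Theta> n \<mapsto> \<epsilon> n \<Theta> n\<close> extends to an algebra endomorphism
  \<open>twist\<close> of the full matrix algebra. Defining it through its traces against \<open>\<Theta>(N)\<close>, which
  determine a matrix because the trace pairing is nondegenerate, avoids checking independence
  of the chosen linear combination.\<close>
locale rep_twist = spanning_rep G N \<Theta>
  for G :: "('g, 'b) monoid_scheme" (structure) and N and \<Theta> :: "'g \<Rightarrow> complex^'m^'m" +
  fixes \<epsilon> :: "'g \<Rightarrow> complex"
  assumes \<epsilon>_nonzero: "n \<in> N \<Longrightarrow> \<epsilon> n \<noteq> 0"
    and \<epsilon>_mult: "x \<in> N \<Longrightarrow> y \<in> N \<Longrightarrow> \<epsilon> (x \<otimes> y) = \<epsilon> x * \<epsilon> y"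
    and \<epsilon>_fixes_trace: "n \<in> N \<Longrightarrow> trace (\<Theta> n) \<noteq> 0 \<Longrightarrow> \<epsilon> n = 1"
begin

definition twist :: "complex^'m^'m \<Rightarrow> complex^'m^'m" where
  "twist X = (THE Y. \<forall>n\<in>N. \<epsilon> n * trace (Y ** \<Theta> n) = trace (X ** \<Theta> n))"

lemma \<epsilon>_mult_trace: "n \<in> N \<Longrightarrow> \<epsilon> n * trace (\<Theta> n) = trace (\<Theta> n)"
  by (cases "trace (\<Theta> n) = 0") (simp_all add: \<epsilon>_fixes_trace)

lemma trace_twisted_sum:
  assumes "f ` I \<subseteq> N" "m \<in> N"
  shows "\<epsilon> m * trace ((\<Sum>i\<in>I. smult_matrix (a i * \<epsilon> (f i)) (\<Theta> (f i))) ** \<Theta> m)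
       = trace ((\<Sum>i\<in>I. smult_matrix (a i) (\<Theta> (f i))) ** \<Theta> m)"
proof -
  have "\<epsilon> (f i) * \<epsilon> m * trace (\<Theta> (f i) ** \<Theta> m) = trace (\<Theta> (f i) ** \<Theta> m)" if "i \<in> I" for i
    using that assms \<epsilon>_mult_trace[of "f i \<otimes> m"] by (auto simp: \<epsilon>_mult m_closed hom)
  then have "(\<Sum>i\<in>I. a i * (\<epsilon> (f i) * \<epsilon> m * trace (\<Theta> (f i) ** \<Theta> m)))
      = (\<Sum>i\<in>I. a i * trace (\<Theta> (f i) ** \<Theta> m))"
    by (intro sum.cong) simp_all
  then show ?thesis
    by (simp add: matrix_mult_sum_left trace_sum sum_distrib_left mult_ac)
qed

lemma twist_unique:
  assumes "\<And>n. n \<in> N \<Longrightarrow> \<epsilon> n * trace (Y ** \<Theta> n) = trace (X ** \<Theta> n)"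
  shows "twist X = Y"
  unfolding twist_def
proof (rule the_equality)
  fix Y' assume Y': "\<forall>n\<in>N. \<epsilon> n * trace (Y' ** \<Theta> n) = trace (X ** \<Theta> n)"
  have "trace ((Y' - Y) ** \<Theta> n) = 0" if "n \<in> N" for n
    using that assms Y' \<epsilon>_nonzero[OF that]
    by (simp add: matrix_diff_rdistrib trace_sub) (metis mult_left_cancel)
  then show "Y' = Y" using eq_0_if_trace_mult_eq_0 by fastforce
qed (use assms in blast)

lemma twist_sum:
  "f ` I \<subseteq> N \<Longrightarrow> twist (\<Sum>i\<in>I. smult_matrix (a i) (\<Theta> (f i)))
     = (\<Sum>i\<in>I. smult_matrix (a i * \<epsilon> (f i)) (\<Theta> (f i)))"
  by (intro twist_unique trace_twisted_sum)

lemma trace_twist: "n \<in> N \<Longrightarrow> \<epsilon> n * trace (twist X ** \<Theta> n) = trace (X ** \<Theta> n)"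
proof -
  assume "n \<in> N"
  obtain S a where "S \<subseteq> N" "X = (\<Sum>n\<in>S. smult_matrix (a n) (\<Theta> n))"
    using spans unfolding rep_span_def by blast
  then show ?thesis
    using twist_sum[of id S a] trace_twisted_sum[of id S n a] \<open>n \<in> N\<close> by simp
qed

lemma twist_smult: "twist (smult_matrix c X) = smult_matrix c (twist X)"
  by (rule twist_unique) (simp add: trace_twist flip: mult.assoc mult.commute[of c])

lemma twist_mult: "twist (X ** Y) = twist X ** twist Y"
proof -
  obtain S a where S: "S \<subseteq> N" "X = (\<Sum>n\<in>S. smult_matrix (a n) (\<Theta> n))"
    using spans unfolding rep_span_def by blast
  obtain S' b where S': "S' \<subseteq> N" "Y = (\<Sum>n\<in>S'. smult_matrix (b n) (\<Theta> n))"
    using spans unfolding rep_span_def by blast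
  have N: "(\<lambda>p. fst p \<otimes> snd p) ` (S \<times> S') \<subseteq> N" using S(1) S'(1) by (auto intro!: m_closed)
  have "X ** Y = (\<Sum>p\<in>S \<times> S'. smult_matrix (a (fst p) * b (snd p)) (\<Theta> (fst p \<otimes> snd p)))"
    using mult_sum_smult[of id S id S' a b] S S' by simp
  then have "twist (X ** Y)
      = (\<Sum>p\<in>S \<times> S'. smult_matrix (a (fst p) * b (snd p) * \<epsilon> (fst p \<otimes> snd p))
                                    (\<Theta> (fst p \<otimes> snd p)))"
    using twist_sum[OF N] by simp
  also have "\<dots> = (\<Sum>p\<in>S \<times> S'. smult_matrix (a (fst p) * \<epsilon> (fst p) * (b (snd p) * \<epsilon> (snd p)))
                                    (\<Theta> (fst p \<otimes> snd p)))"
  proof (intro sum.cong refl)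
    fix p assume "p \<in> S \<times> S'"
    then have "fst p \<in> N" "snd p \<in> N" using S(1) S'(1) by auto
    then have "\<epsilon> (fst p \<otimes> snd p) = \<epsilon> (fst p) * \<epsilon> (snd p)" by (rule \<epsilon>_mult)
    then show "smult_matrix (a (fst p) * b (snd p) * \<epsilon> (fst p \<otimes> snd p)) (\<Theta> (fst p \<otimes> snd p))
        = smult_matrix (a (fst p) * \<epsilon> (fst p) * (b (snd p) * \<epsilon> (snd p))) (\<Theta> (fst p \<otimes> snd p))"
      by (simp add: mult_ac)
  qed
  also have "\<dots> = twist X ** twist Y"
    using mult_sum_smult[of id S id S' "\<lambda>n. a n * \<epsilon> n" "\<lambda>n. b n * \<epsilon> n"]
      twist_sum[of id S a] twist_sum[of id S' b] S S' by simp
  finally show ?thesis .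
qed

lemma twist_eq_smult:
  assumes "c \<noteq> 0" "\<And>n. n \<in> N \<Longrightarrow> trace (X ** \<Theta> n) \<noteq> 0 \<Longrightarrow> \<epsilon> n = c"
  shows "twist X = smult_matrix (inverse c) X"
  by (rule twist_unique) (use assms in \<open>fastforce simp: field_simps\<close>)

text \<open>The hypothesis on \<open>c\<close> says \<open>twist (Pr z) = Pr z / c z\<close>; as \<open>twist\<close> is multiplicative, only the
  factor set remains, and it cancels.\<close>
lemma proj_rep_twist_scalar_mult:
  assumes Pr: "proj_rep G K Pr \<alpha>" and K: "x \<in> K" "y \<in> K" "x \<otimes> y \<in> K"
    and c: "\<And>z. z \<in> K \<Longrightarrow> c z \<noteq> 0"
    and scalar: "\<And>z n. z \<in> K \<Longrightarrow> n \<in> N \<Longrightarrow> trace (Pr z ** \<Theta> n) \<noteq> 0 \<Longrightarrow> \<epsilon> n = c z"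
  shows "c (x \<otimes> y) = c x * c y"
proof -
  have twist_Pr: "twist (Pr z) = smult_matrix (inverse (c z)) (Pr z)" if "z \<in> K" for z
    using that c scalar by (intro twist_eq_smult) auto
  have PP: "Pr x ** Pr y = smult_matrix (\<alpha> x y) (Pr (x \<otimes> y))" and "\<alpha> x y \<noteq> 0"
    using Pr K unfolding proj_rep_def by (auto simp: mat_mult_eq_smult_matrix)
  have "smult_matrix (\<alpha> x y * inverse (c (x \<otimes> y))) (Pr (x \<otimes> y)) = twist (Pr x ** Pr y)"
    by (simp add: PP twist_smult twist_Pr[OF K(3)])
  also have "\<dots> = smult_matrix (\<alpha> x y * (inverse (c x) * inverse (c y))) (Pr (x \<otimes> y))"
    unfolding twist_mult twist_Pr[OF K(1)] twist_Pr[OF K(2)] by (simp add: PP mult_ac)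
  finally have "\<alpha> x y * inverse (c (x \<otimes> y)) = \<alpha> x y * (inverse (c x) * inverse (c y))"
    using Pr K(3) invertible_neq_0 unfolding proj_rep_def by (blast intro: smult_matrix_cancel)
  then show ?thesis using \<open>\<alpha> x y \<noteq> 0\<close> c K by (simp add: field_simps)
qed

end

section \<open>Continuity of functions constant on cosets\<close>

lemma continuous_map_if_locally_constant:
  assumes "f \<in> topspace X \<rightarrow> topspace Y"
    and "\<And>x. x \<in> topspace X \<Longrightarrow> \<exists>U. openin X U \<and> x \<in> U \<and> (\<forall>y\<in>U. f y = f x)"
  shows "continuous_map X Y f"
  unfolding continuous_map_def
proof (intro conjI allI impI assms(1))
  fix V assume "openin Y V"
  show "openin X {x \<in> topspace X. f x \<in> V}"
  proof (subst openin_subopen, intro ballI)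
    fix x assume x: "x \<in> {x \<in> topspace X. f x \<in> V}"
    then obtain U where U: "openin X U" "x \<in> U" "\<forall>y\<in>U. f y = f x" using assms(2) by blast
    have "U \<subseteq> {x \<in> topspace X. f x \<in> V}"
      using openin_subset[OF U(1)] U(3) x by auto
    then show "\<exists>U. openin X U \<and> x \<in> U \<and> U \<subseteq> {x \<in> topspace X. f x \<in> V}"
      using U(1,2) by blast
  qed
qed

text \<open>The coset \<open>zN\<close>, the preimage of \<open>N\<close> under left translation by \<open>z\<^sup>-\<^sup>1\<close>,
  is an open neighbourhood of \<open>z\<close> in \<open>K\<close> on which the function is constant.\<close>
lemma continuous_map_if_constant_on_cosets:
  assumes G: "group G" "topspace T = carrier G"
    and mult: "continuous_map (prod_topology T T) T (\<lambda>(x, y). x \<otimes>\<^bsub>G\<^esub> y)"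
    and N: "openin T N" "subgroup N G" and K: "subgroup K G" "N \<subseteq> K"
    and f: "\<And>x n. x \<in> K \<Longrightarrow> n \<in> N \<Longrightarrow> f (x \<otimes>\<^bsub>G\<^esub> n) = f x"
    and f_range: "f \<in> K \<rightarrow> topspace Y"
  shows "continuous_map (subtopology T K) Y f"
proof (rule continuous_map_if_locally_constant)
  interpret G: group G by (rule G(1))
  show "f \<in> topspace (subtopology T K) \<rightarrow> topspace Y" using f_range by auto
  fix z assume "z \<in> topspace (subtopology T K)"
  then have z: "z \<in> K" "z \<in> carrier G" using K(1) subgroup.subset by auto
  define V where "V = {w \<in> topspace T. inv\<^bsub>G\<^esub> z \<otimes>\<^bsub>G\<^esub> w \<in> N}"
  have "continuous_map T T (\<lambda>w. inv\<^bsub>G\<^esub> z \<otimes>\<^bsub>G\<^esub> w)"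
    using continuous_map_compose[OF continuous_map_pairedI[OF continuous_map_const[THEN iffD2] continuous_map_id] mult]
      z(2) G(2) by (simp add: o_def)
  then have "openin T V" unfolding V_def using N(1) by (rule openin_continuous_map_preimage)
  have split: "w = z \<otimes>\<^bsub>G\<^esub> (inv\<^bsub>G\<^esub> z \<otimes>\<^bsub>G\<^esub> w)" if "w \<in> carrier G" for w
    using z(2) that by (simp add: G.m_assoc[symmetric])
  have V_K: "V \<subseteq> K"
  proof
    fix w assume "w \<in> V"
    then have "w \<in> carrier G" "inv\<^bsub>G\<^esub> z \<otimes>\<^bsub>G\<^esub> w \<in> N" using G(2) unfolding V_def by auto
    then show "w \<in> K" using split z(1) K subgroup.m_closed by (metis subsetD)
  qed
  show "\<exists>U. openin (subtopology T K) U \<and> z \<in> U \<and> (\<forall>w\<in>U. f w = f z)"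
  proof (intro exI conjI ballI)
    show "openin (subtopology T K) V"
      unfolding openin_subtopology using \<open>openin T V\<close> V_K by blast
    show "z \<in> V" using z G(2) N(2) subgroup.one_closed unfolding V_def by fastforce
    fix w assume "w \<in> V"
    then have "w \<in> carrier G" "inv\<^bsub>G\<^esub> z \<otimes>\<^bsub>G\<^esub> w \<in> N" using G(2) unfolding V_def by auto
    then show "f w = f z" using f[OF z(1)] split by metis
  qed
qed

lemma lin_char_divide:
  assumes "lin_char G T H \<psi>" "lin_char G T H \<psi>'"
  shows "lin_char G T H (\<lambda>x. \<psi> x / \<psi>' x)"
  using assms unfolding lin_char_def
  by (auto simp: continuous_map_atin tendsto_divide)

lemma lin_char_quot_if_mult:
  assumes prof: "profinite_group G T" and N: "openin T N" "N \<lhd> G" and K: "subgroup K G" "N \<subseteq> K"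
    and \<nu>: "F_fun G K N \<nu>" "\<And>x y. x \<in> K \<Longrightarrow> y \<in> K \<Longrightarrow> \<nu> (x \<otimes>\<^bsub>G\<^esub> y) = \<nu> x * \<nu> y"
  shows "lin_char_quot G T K N \<nu>"
proof -
  have G: "group G" "topspace T = carrier G"
    and mult_cont: "continuous_map (prod_topology T T) T (\<lambda>(x, y). x \<otimes>\<^bsub>G\<^esub> y)"
    using prof unfolding profinite_group_def by auto
  have NG: "subgroup N G" using N(2) by (rule normal_imp_subgroup)
  have \<nu>_nz: "x \<in> K \<Longrightarrow> \<nu> x \<noteq> 0" and \<nu>_coset: "x \<in> K \<Longrightarrow> n \<in> N \<Longrightarrow> \<nu> (x \<otimes>\<^bsub>G\<^esub> n) = \<nu> x" for x n
    using \<nu>(1) unfolding F_fun_def by auto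
  have one: "\<one>\<^bsub>G\<^esub> \<in> K" using K(1) by (rule subgroup.one_closed)
  have "\<nu> n = 1" if "n \<in> N" for n
  proof -
    have "\<nu> \<one>\<^bsub>G\<^esub> = 1" using \<nu>(2)[OF one one] \<nu>_nz[OF one] G(1) by (simp add: group.is_monoid)
    then show ?thesis using \<nu>_coset[OF one that] that subgroup.subset[OF NG] G(1) by (auto simp: group.is_monoid)
  qed
  moreover have "continuous_map (subtopology T K) euclidean \<nu>"
    using G mult_cont N(1) NG K \<nu>_coset by (intro continuous_map_if_constant_on_cosets) auto
  ultimately show ?thesis
    unfolding lin_char_quot_def lin_char_def using \<nu>_nz \<nu>(2) by blast
qed

lemma rep_twist_if_lin_char:
  assumes "subgroup N G" "cont_rep G T N \<Theta>" "rep_span N \<Theta> = UNIV"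
    and \<epsilon>: "lin_char G T (carrier G) \<epsilon>" "\<forall>n\<in>N. trace (\<Theta> n) \<noteq> 0 \<longrightarrow> \<epsilon> n = 1"
  shows "rep_twist G N \<Theta> \<epsilon>"
proof (intro rep_twist.intro spanning_rep.intro rep_twist_axioms.intro)
  show "matrix_rep G N \<Theta>" using assms(1,2) unfolding matrix_rep_def cont_rep_def by blast
  show "spanning_rep_axioms N \<Theta>" using assms(3) by (rule spanning_rep_axioms.intro)
  have "N \<subseteq> carrier G" using assms(1) by (rule subgroup.subset)
  then show "\<And>n. n \<in> N \<Longrightarrow> \<epsilon> n \<noteq> 0"
    and "\<And>x y. x \<in> N \<Longrightarrow> y \<in> N \<Longrightarrow> \<epsilon> (x \<otimes>\<^bsub>G\<^esub> y) = \<epsilon> x * \<epsilon> y"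
    using \<epsilon>(1) unfolding lin_char_def by blast+
qed (use \<epsilon>(2) in blast)

text \<open>\<open>\<nu>/\<epsilon>\<close> is the scalar by which twisting by \<open>\<epsilon>\<close> acts on the projective representation
  underlying \<open>\<hat>\<theta>\<close>, hence multiplicative.\<close>
lemma lin_char_quot_if_twist_of_strong_ext:
  fixes \<Theta> :: "'g \<Rightarrow> complex^'m^'m"
  assumes prof: "profinite_group G T" and N: "openin T N" "N \<lhd> G" and K: "subgroup K G" "N \<subseteq> K"
    and \<Theta>: "cont_rep G T N \<Theta>" "rep_span N \<Theta> = UNIV"
    and Pr: "proj_rep G K Pr \<alpha>" "\<forall>x\<in>K. \<forall>n\<in>N. Pr (x \<otimes>\<^bsub>G\<^esub> n) = Pr x ** \<Theta> n"
    and \<epsilon>: "lin_char G T (carrier G) \<epsilon>" "\<forall>n\<in>N. trace (\<Theta> n) \<noteq> 0 \<longrightarrow> \<epsilon> n = 1"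
    and \<nu>: "F_fun G K N \<nu>" "\<forall>x\<in>K. trace (Pr x) * \<epsilon> x = trace (Pr x) * \<nu> x"
  shows "lin_char_quot G T K N \<nu>"
proof -
  have NG: "subgroup N G" using N(2) by (rule normal_imp_subgroup)
  have KG: "K \<subseteq> carrier G" using K(1) by (rule subgroup.subset)
  have \<epsilon>_ne_0: "x \<in> carrier G \<Longrightarrow> \<epsilon> x \<noteq> 0"
    and \<epsilon>_hom: "x \<in> carrier G \<Longrightarrow> y \<in> carrier G \<Longrightarrow> \<epsilon> (x \<otimes>\<^bsub>G\<^esub> y) = \<epsilon> x * \<epsilon> y" for x y
    using \<epsilon>(1) unfolding lin_char_def by auto
  have \<nu>_nz: "x \<in> K \<Longrightarrow> \<nu> x \<noteq> 0" and \<nu>_coset: "x \<in> K \<Longrightarrow> n \<in> N \<Longrightarrow> \<nu> (x \<otimes>\<^bsub>G\<^esub> n) = \<nu> x" for x n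
    using \<nu>(1) unfolding F_fun_def by auto
  interpret rep_twist G N \<Theta> \<epsilon> using rep_twist_if_lin_char[OF NG \<Theta> \<epsilon>] .
  define c where "c x = \<nu> x / \<epsilon> x" for x
  have scalar: "\<epsilon> n = c z" if z: "z \<in> K" and n: "n \<in> N" and tr: "trace (Pr z ** \<Theta> n) \<noteq> 0" for z n
  proof -
    have zG: "z \<in> carrier G" and nG: "n \<in> carrier G" using z n KG K(2) by auto
    have zn: "z \<otimes>\<^bsub>G\<^esub> n \<in> K" using subgroup.m_closed[OF K(1) z] n K(2) by blast
    have "trace (Pr (z \<otimes>\<^bsub>G\<^esub> n)) \<noteq> 0" using Pr(2) z n tr by simp
    then have "\<epsilon> (z \<otimes>\<^bsub>G\<^esub> n) = \<nu> (z \<otimes>\<^bsub>G\<^esub> n)" using \<nu>(2) zn by auto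
    then have "\<epsilon> z * \<epsilon> n = \<nu> z" by (simp add: \<epsilon>_hom[OF zG nG] \<nu>_coset[OF z n])
    then show ?thesis using \<epsilon>_ne_0[OF zG] by (auto simp: c_def field_simps)
  qed
  have "\<nu> (x \<otimes>\<^bsub>G\<^esub> y) = \<nu> x * \<nu> y" if "x \<in> K" "y \<in> K" for x y
  proof -
    have xy: "x \<otimes>\<^bsub>G\<^esub> y \<in> K" using subgroup.m_closed[OF K(1) that] .
    have "c (x \<otimes>\<^bsub>G\<^esub> y) = c x * c y"
      using Pr(1) that xy \<nu>_nz \<epsilon>_ne_0 KG scalar
      by (intro proj_rep_twist_scalar_mult) (auto simp: c_def)
    moreover have "x \<in> carrier G" "y \<in> carrier G" using that KG by auto
    ultimately show ?thesis using \<epsilon>_ne_0 by (simp add: c_def \<epsilon>_hom field_simps)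
  qed
  then show ?thesis by (rule lin_char_quot_if_mult[OF prof N K \<nu>(1)])
qed

lemma mem_Gamma_if_twist_of_strong_ext:
  fixes G :: "('g, 'b) monoid_scheme"
  assumes prof: "profinite_group G T" and N: "openin T N" "N \<lhd> G"
    and irr: "irr_char G T N TYPE('m::finite) \<theta>"
    and K: "subgroup K G" "N \<subseteq> K" and ext: "strong_ext G T N K TYPE('m) \<theta> \<theta>h"
    and \<epsilon>: "lin_char G T (carrier G) \<epsilon>" "\<forall>n\<in>N. \<theta> n \<noteq> 0 \<longrightarrow> \<epsilon> n = 1"
    and \<nu>: "F_fun G K N \<nu>" "\<forall>x\<in>K. \<theta>h x * \<epsilon> x = \<theta>h x * \<nu> x"
  shows "\<nu> \<in> Gamma G T K N \<theta>h"
proof -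
  have G: "group G" using prof unfolding profinite_group_def by blast
  have NG: "subgroup N G" using N(2) by (rule normal_imp_subgroup)
  obtain \<Theta> :: "'g \<Rightarrow> complex^'m^'m" and Pr \<alpha> where \<Theta>: "cont_rep G T N \<Theta>" "affords N \<Theta> \<theta>"
    and Pr: "proj_rep G K Pr \<alpha>" "\<forall>x\<in>K. \<forall>n\<in>N. Pr (x \<otimes>\<^bsub>G\<^esub> n) = Pr x ** \<Theta> n"
    and \<theta>h: "\<forall>x\<in>K. \<theta>h x = trace (Pr x)"
    using ext unfolding strong_ext_def by blast
  have "rep_span N \<Theta> = UNIV"
    using rep_span_eq_UNIV_if_affords_irr_char[OF G irr NG \<Theta>] .
  then have "lin_char_quot G T K N \<nu>"
    using prof N K \<Theta> Pr \<epsilon> \<nu> \<theta>h unfolding affords_def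
    by (intro lin_char_quot_if_twist_of_strong_ext) auto
  then show ?thesis unfolding Gamma_def using \<epsilon>(1) \<nu>(2) by blast
qed

theorem lemma2p8:
  fixes G :: "('g, 'b) monoid_scheme" and T :: "'g topology"
    and N K L :: "'g set" and \<theta> \<theta>h \<psi> \<psi>' \<mu> \<mu>' :: "'g \<Rightarrow> complex" and g :: 'g
  assumes prof: "profinite_group G T"
    and N_open: "openin T N" and N_normal: "N \<lhd> G"
    and \<theta>_irr: "irr_char G T N TYPE('m::finite) \<theta>"
    and L_sub: "subgroup L G" and NL: "N \<subseteq> L" and L_stab: "L \<subseteq> stab_twist G T N \<theta>"
    and K_sub: "subgroup K G" and NK: "N \<subseteq> K" and K_stab: "K \<subseteq> stab_char G N \<theta>"
    and L_norm_K: "\<forall>l \<in> L. (\<lambda>x. l \<otimes>\<^bsub>G\<^esub> x \<otimes>\<^bsub>G\<^esub> inv\<^bsub>G\<^esub> l) ` K = K"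
    and ext: "strong_ext G T N K TYPE('m) \<theta> \<theta>h"
    and gL: "g \<in> L"
    and \<psi>_lin: "lin_char G T (carrier G) \<psi>" and \<psi>'_lin: "lin_char G T (carrier G) \<psi>'"
    and \<psi>_N: "\<forall>n \<in> N. conj_fun G g \<theta> n = \<theta> n * \<psi> n"
    and \<psi>'_N: "\<forall>n \<in> N. conj_fun G g \<theta> n = \<theta> n * \<psi>' n"
    and \<mu>_F: "F_fun G K N \<mu>" and \<mu>'_F: "F_fun G K N \<mu>'"
    and \<mu>_K: "\<forall>x \<in> K. conj_fun G g \<theta>h x = \<theta>h x * \<psi> x * \<mu> x"
    and \<mu>'_K: "\<forall>x \<in> K. conj_fun G g \<theta>h x = \<theta>h x * \<psi>' x * \<mu>' x"
  shows "\<exists>\<nu> \<in> Gamma G T K N \<theta>h. \<forall>x \<in> K. \<mu>' x = \<mu> x * \<nu> x"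
proof -
  define \<epsilon> where "\<epsilon> x = \<psi> x / \<psi>' x" for x
  define \<nu> where "\<nu> x = \<mu>' x / \<mu> x" for x
  have \<psi>'_nz: "x \<in> carrier G \<Longrightarrow> \<psi>' x \<noteq> 0" for x using \<psi>'_lin unfolding lin_char_def by blast
  have \<mu>_nz: "x \<in> K \<Longrightarrow> \<mu> x \<noteq> 0" for x using \<mu>_F unfolding F_fun_def by blast
  have NG: "N \<subseteq> carrier G" and KG: "K \<subseteq> carrier G"
    using N_normal K_sub by (auto dest: normal_imp_subgroup subgroup.subset)
  have "lin_char G T (carrier G) \<epsilon>" unfolding \<epsilon>_def using \<psi>_lin \<psi>'_lin by (rule lin_char_divide)
  moreover have "\<forall>n\<in>N. \<theta> n \<noteq> 0 \<longrightarrow> \<epsilon> n = 1"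
    using \<psi>_N \<psi>'_N \<psi>'_nz NG unfolding \<epsilon>_def by force
  moreover have "F_fun G K N \<nu>" using \<mu>_F \<mu>'_F unfolding F_fun_def \<nu>_def by simp
  moreover have "\<theta>h x * \<epsilon> x = \<theta>h x * \<nu> x" if x: "x \<in> K" for x
  proof -
    have "\<theta>h x * \<psi> x * \<mu> x = \<theta>h x * \<psi>' x * \<mu>' x" using \<mu>_K \<mu>'_K x by metis
    then have "\<theta>h x * \<epsilon> x - \<theta>h x * \<nu> x = 0"
      using \<mu>_nz[OF x] \<psi>'_nz x KG by (auto simp: \<epsilon>_def \<nu>_def field_simps)
    then show ?thesis by simp
  qed
  ultimately have "\<nu> \<in> Gamma G T K N \<theta>h"
    using prof N_open N_normal \<theta>_irr K_sub NK ext by (intro mem_Gamma_if_twist_of_strong_ext) auto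
  moreover have "\<forall>x\<in>K. \<mu>' x = \<mu> x * \<nu> x" using \<mu>_nz by (simp add: \<nu>_def)
  ultimately show ?thesis by blast
qed

end
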